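(* For every integer $n\geq1$, $\mathrm{C}_{\sharp\leq2}\nleq_W\mathrm{C}_{\sharp=n}$.
   Context: Represented spaces carry partial surjections $\delta:\subseteq\mathbb{N}^\mathbb{N}\to X$; a realizer $F$ of $f$ satisfies $\delta_YF(p)\in f(\delta_X(p))$ for $p\in\operatorname{dom}(f\delta_X)$. $f\leq_W g$ iff there are computable partial $K,H$ on Baire space such that $p\mapsto K\langle p,G(H(p))\rangle$ realizes $f$ for every realizer $G$ of $g$. Closed subsets of Cantor space are named by binary trees (set of infinite paths); $\mathrm{C}_{\sharp\leq m}$ is the restriction of $\mathrm{C}_{\{0,1\}^\mathbb{N}}$ (output any point of the closed set) to trees having exactly $m$ vertices at each level $k$ with $2^k\geq m$, and $\mathrm{C}_{\sharp=m}$ its further restriction to trees in which, from some finite depth on, every vertex has exactly one child. *)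

theory Defs
  imports Main
begin

type_synonym baire = "nat \<Rightarrow> nat"

text \<open>Terms for mu-recursive functions relative to an oracle p in Baire space.\<close>
datatype rf = Zero | Succ | Proj nat | Orc | Comp rf "rf list" | Prim rf rf | Mu rf

definition arg0 :: "nat list \<Rightarrow> nat" where
  "arg0 xs = (case xs of [] \<Rightarrow> 0 | x # _ \<Rightarrow> x)"

inductive ev :: "baire \<Rightarrow> rf \<Rightarrow> nat list \<Rightarrow> nat \<Rightarrow> bool" for p :: baire where
  ev_zero: "ev p Zero xs 0"
| ev_succ: "ev p Succ xs (Suc (arg0 xs))"
| ev_proj: "ev p (Proj i) xs (if i < length xs then xs ! i else 0)"
| ev_orc: "ev p Orc xs (p (arg0 xs))"
| ev_comp: "list_all2 (\<lambda>g y. ev p g xs y) gs ys \<Longrightarrow> ev p f ys z \<Longrightarrow> ev p (Comp f gs) xs z"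
| ev_prim0: "ev p f xs z \<Longrightarrow> ev p (Prim f g) (0 # xs) z"
| ev_primS: "ev p (Prim f g) (k # xs) y \<Longrightarrow> ev p g (k # y # xs) z
             \<Longrightarrow> ev p (Prim f g) (Suc k # xs) z"
| ev_mu: "ev p f (k # xs) 0 \<Longrightarrow> (\<forall>m<k. \<exists>y. 0 < y \<and> ev p f (m # xs) y)
          \<Longrightarrow> ev p (Mu f) xs k"

definition computable_partial :: "(baire \<Rightarrow> baire option) \<Rightarrow> bool" where
  "computable_partial F \<longleftrightarrow>
     (\<exists>e. \<forall>p q. F p = Some q \<longrightarrow> (\<forall>n. ev p e [n] (q n)))"

definition pair :: "baire \<Rightarrow> baire \<Rightarrow> baire" where
  "pair p q = (\<lambda>n. if even n then p (n div 2) else q (n div 2))"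

text \<open>A representation is a partial map delta from Baire space; a (partial multivalued)
  problem f assigns to each point its set of solutions; dom f = points with nonempty value.\<close>

definition realizer_dom :: "(baire \<Rightarrow> 'a option) \<Rightarrow> ('a \<Rightarrow> 'b set) \<Rightarrow> baire set" where
  "realizer_dom dX f = {p. \<exists>x. dX p = Some x \<and> f x \<noteq> {}}"

definition realizes ::
  "(baire \<Rightarrow> 'a option) \<Rightarrow> (baire \<Rightarrow> 'b option) \<Rightarrow> ('a \<Rightarrow> 'b set) \<Rightarrow> (baire \<Rightarrow> baire option) \<Rightarrow> bool" where
  "realizes dX dY f F \<longleftrightarrow>
     (\<forall>p \<in> realizer_dom dX f. \<exists>q y. F p = Some q \<and> dY q = Some y \<and> y \<in> f (the (dX p)))"

definition weihrauch_le ::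
  "(baire \<Rightarrow> 'a option) \<Rightarrow> (baire \<Rightarrow> 'b option) \<Rightarrow> ('a \<Rightarrow> 'b set) \<Rightarrow>
   (baire \<Rightarrow> 'c option) \<Rightarrow> (baire \<Rightarrow> 'd option) \<Rightarrow> ('c \<Rightarrow> 'd set) \<Rightarrow> bool" where
  "weihrauch_le dX dY f dU dV g \<longleftrightarrow>
     (\<exists>K H. computable_partial K \<and> computable_partial H \<and>
        (\<forall>G. realizes dU dV g G \<longrightarrow>
              realizes dX dY f (\<lambda>p. Option.bind (H p) (\<lambda>h. Option.bind (G h) (\<lambda>r. K (pair p r))))))"

text \<open>Bijective coding of binary words by natural numbers.\<close>
fun wcode :: "bool list \<Rightarrow> nat" where
  "wcode [] = 0"
| "wcode (b # w) = Suc (2 * wcode w + (if b then 1 else 0))"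

definition is_tree :: "bool list set \<Rightarrow> bool" where
  "is_tree T \<longleftrightarrow> (\<forall>u v. u @ v \<in> T \<longrightarrow> u \<in> T)"

text \<open>A tree is named by the characteristic function of its set of vertices.\<close>
definition tree_rep :: "baire \<Rightarrow> bool list set option" where
  "tree_rep p = (if (\<forall>n. p n \<le> 1) \<and> is_tree {w. p (wcode w) = 1}
                 then Some {w. p (wcode w) = 1} else None)"

definition cantor_rep :: "baire \<Rightarrow> (nat \<Rightarrow> bool) option" where
  "cantor_rep p = (if (\<forall>n. p n \<le> 1) then Some (\<lambda>n. p n = 1) else None)"

definition paths :: "bool list set \<Rightarrow> (nat \<Rightarrow> bool) set" where
  "paths T = {x. \<forall>k. map x [0..<k] \<in> T}"

definition level :: "bool list set \<Rightarrow> nat \<Rightarrow> bool list set" where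
  "level T k = {w \<in> T. length w = k}"

definition C_le :: "nat \<Rightarrow> bool list set \<Rightarrow> (nat \<Rightarrow> bool) set" where
  "C_le m T = (if is_tree T \<and> (\<forall>k. m \<le> 2 ^ k \<longrightarrow> card (level T k) = m)
               then paths T else {})"

definition C_eq :: "nat \<Rightarrow> bool list set \<Rightarrow> (nat \<Rightarrow> bool) set" where
  "C_eq m T = (if is_tree T \<and> (\<forall>k. m \<le> 2 ^ k \<longrightarrow> card (level T k) = m)
                  \<and> (\<exists>d. \<forall>w \<in> T. d \<le> length w \<longrightarrow> card {b. w @ [b] \<in> T} = 1)
               then paths T else {})"

end

theory Submission
  imports Defs
begin

text \<open>Suppose computable K and H reduce C_{#<=2} to C_{#=n}. Computable functionals are
  continuous: finitely many output digits depend on finitely many input digits. We build an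
  instance of C_{#<=2} in stages: a spine z together with, at every length, one side word that
  leaves z at the most recent branching point and continues with zeros; with infinitely many
  branching points z is the only path. At stage j only a prefix of z is fixed; padding it with
  zeros gives a valid instance, H turns it into an instance of C_{#=n}, and K, applied to one of
  its paths y, computes some bit at the current position. The next bit of z is chosen to differ
  from it, and enough zeros follow that, up to the moduli of continuity of H and K, the final
  instance looks like the stage-j instance. On the final instance, H produces a tree S that stops
  branching beyond some depth j. At stage j the prefix of y read by K lies in S and extends to a
  path of S, on which K must then output the bit that z avoids, although z is the only solution.\<close>

section \<open>Continuity of computable functionals\<close>

definition agree :: "nat \<Rightarrow> baire \<Rightarrow> baire \<Rightarrow> bool" where
  "agree N a b \<longleftrightarrow> (\<forall>t<N. a t = b t)"

lemma agree_mono: "agree N a b \<Longrightarrow> M \<le> N \<Longrightarrow> agree M a b"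
  by (auto simp: agree_def)

lemma agree_pair: "agree N p p' \<Longrightarrow> agree N r r' \<Longrightarrow> agree N (pair p r) (pair p' r')"
  unfolding agree_def pair_def by auto

lemma ex_common_bound:
  fixes P :: "nat \<Rightarrow> nat \<Rightarrow> bool"
  assumes "\<forall>m<k. \<exists>N. P m N" and "\<And>m N N'. P m N \<Longrightarrow> N \<le> N' \<Longrightarrow> P m N'"
  shows "\<exists>N. \<forall>m<k. P m N"
proof -
  obtain f where f: "\<forall>m<k. P m (f m)" using assms(1) by metis
  have "f m \<le> (\<Sum>i<k. f i)" if "m < k" for m
    using that by (intro member_le_sum) auto
  then have "\<forall>m<k. P m (\<Sum>i<k. f i)" using f assms(2) by blast
  then show ?thesis by blast
qed

lemma list_all2_unique_right:
  "list_all2 (\<lambda>g y. R g y \<and> (\<forall>y'. R g y' \<longrightarrow> y = y')) gs ys \<Longrightarrow> list_all2 R gs ys' \<Longrightarrow> ys = ys'"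
proof (induction gs ys arbitrary: ys' rule: list_all2_induct)
  case Nil then show ?case by simp
next
  case (Cons g gs y ys)
  then show ?case by (auto simp: list_all2_Cons1)
qed

lemma ev_deterministic: "ev p e xs y \<Longrightarrow> ev p e xs y' \<Longrightarrow> y = y'"
proof (induction arbitrary: y' rule: ev.induct)
  case (ev_comp xs gs ys f z)
  from ev_comp.prems obtain ys' where "list_all2 (\<lambda>g. ev p g xs) gs ys'" "ev p f ys' y'"
    by (cases rule: ev.cases) auto
  then show ?case using ev_comp list_all2_unique_right[OF ev_comp(1)] by blast
next
  case (ev_prim0 f xs z g)
  from ev_prim0.prems show ?case by (cases rule: ev.cases) (use ev_prim0 in auto)
next
  case (ev_primS f g k xs y z)
  from ev_primS.prems obtain y2 where "ev p (Prim f g) (k # xs) y2" "ev p g (k # y2 # xs) y'"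
    by (cases rule: ev.cases) auto
  then show ?case using ev_primS by blast
next
  case (ev_mu f k xs)
  from ev_mu.prems have zero: "ev p f (y' # xs) 0" and pos: "\<forall>m<y'. \<exists>y>0. ev p f (m # xs) y"
    by (cases rule: ev.cases; auto)+
  show ?case
  proof (rule linorder_cases[of k y'])
    assume "k < y'"
    then show ?thesis using pos ev_mu.IH(1) by blast
  next
    assume "y' < k"
    then show ?thesis using zero ev_mu.IH(2) by blast
  qed
qed (auto elim: ev.cases)

definition determined_by_prefix :: "baire \<Rightarrow> rf \<Rightarrow> nat list \<Rightarrow> nat \<Rightarrow> nat \<Rightarrow> bool" where
  "determined_by_prefix p e xs y N \<longleftrightarrow> (\<forall>p'. agree N p p' \<longrightarrow> ev p' e xs y)"

lemma determined_by_prefix_mono: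
  "determined_by_prefix p e xs y N \<Longrightarrow> N \<le> N' \<Longrightarrow> determined_by_prefix p e xs y N'"
  unfolding determined_by_prefix_def using agree_mono by blast

lemma list_all2_determined_by_prefix:
  "list_all2 (\<lambda>g y. \<exists>N. determined_by_prefix p g xs y N) gs ys \<Longrightarrow>
   \<exists>N. list_all2 (\<lambda>g y. determined_by_prefix p g xs y N) gs ys"
proof (induction gs ys rule: list_all2_induct)
  case Nil then show ?case by simp
next
  case (Cons g gs y ys)
  then obtain N N1 where "list_all2 (\<lambda>g y. determined_by_prefix p g xs y N) gs ys"
    "determined_by_prefix p g xs y N1" by auto
  then have "list_all2 (\<lambda>g y. determined_by_prefix p g xs y (max N N1)) (g # gs) (y # ys)"
    by (auto elim!: list_all2_mono intro: determined_by_prefix_mono)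
  then show ?case by blast
qed

lemma determined_by_prefix_Comp:
  assumes N: "list_all2 (\<lambda>g y. determined_by_prefix p g xs y N) gs ys"
    and N1: "determined_by_prefix p f ys z N1"
  shows "determined_by_prefix p (Comp f gs) xs z (max N N1)"
  unfolding determined_by_prefix_def
proof (intro allI impI)
  fix p' assume p': "agree (max N N1) p p'"
  have "list_all2 (\<lambda>g y. ev p' g xs y) gs ys"
    using N by (rule list_all2_mono)
      (use p' in \<open>meson agree_mono max.cobounded1 determined_by_prefix_def\<close>)
  moreover have "ev p' f ys z"
    using N1 p' by (meson agree_mono max.cobounded2 determined_by_prefix_def)
  ultimately show "ev p' (Comp f gs) xs z" by (rule ev.ev_comp)
qed

lemma determined_by_prefix_Mu:
  assumes N: "determined_by_prefix p f (k # xs) 0 N"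
    and N1: "\<forall>m<k. \<exists>y>0. determined_by_prefix p f (m # xs) y N1"
  shows "determined_by_prefix p (Mu f) xs k (max N N1)"
  unfolding determined_by_prefix_def
proof (intro allI impI)
  fix p' assume p': "agree (max N N1) p p'"
  have "ev p' f (k # xs) 0"
    using N p' by (meson agree_mono max.cobounded1 determined_by_prefix_def)
  moreover have "\<forall>m<k. \<exists>y>0. ev p' f (m # xs) y"
    using N1 p' by (meson agree_mono max.cobounded2 determined_by_prefix_def)
  ultimately show "ev p' (Mu f) xs k" by (rule ev.ev_mu)
qed

lemma ev_finite_use: "ev p e xs y \<Longrightarrow> \<exists>N. determined_by_prefix p e xs y N"
proof (induction rule: ev.induct)
  case (ev_zero xs) then show ?case by (auto simp: determined_by_prefix_def intro: ev.ev_zero)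
next
  case (ev_succ xs) then show ?case by (auto simp: determined_by_prefix_def intro: ev.ev_succ)
next
  case (ev_proj i xs) then show ?case unfolding determined_by_prefix_def using ev.ev_proj by blast
next
  case (ev_orc xs)
  have "determined_by_prefix p Orc xs (p (arg0 xs)) (Suc (arg0 xs))"
    unfolding determined_by_prefix_def agree_def using ev.ev_orc by (metis lessI)
  then show ?case by blast
next
  case (ev_comp xs gs ys f z)
  have "list_all2 (\<lambda>g y. \<exists>N. determined_by_prefix p g xs y N) gs ys"
    using ev_comp.IH(1) by (rule list_all2_mono) blast
  then obtain N where "list_all2 (\<lambda>g y. determined_by_prefix p g xs y N) gs ys"
    using list_all2_determined_by_prefix by blast
  moreover obtain N1 where "determined_by_prefix p f ys z N1" using ev_comp.IH(2) by blast
  ultimately show ?case by (blast intro: determined_by_prefix_Comp)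
next
  case (ev_prim0 f xs z g)
  then obtain N where "determined_by_prefix p f xs z N" by blast
  then have "determined_by_prefix p (Prim f g) (0 # xs) z N"
    by (auto simp: determined_by_prefix_def intro: ev.ev_prim0)
  then show ?case by blast
next
  case (ev_primS f g k xs y z)
  then obtain N N1 where "determined_by_prefix p (Prim f g) (k # xs) y N"
    "determined_by_prefix p g (k # y # xs) z N1" by blast
  then have "determined_by_prefix p (Prim f g) (Suc k # xs) z (max N N1)"
    unfolding determined_by_prefix_def by (meson agree_mono ev.ev_primS max.cobounded1 max.cobounded2)
  then show ?case by blast
next
  case (ev_mu f k xs)
  obtain N where N: "determined_by_prefix p f (k # xs) 0 N" using ev_mu.IH(1) by blast
  have "\<exists>N1. \<forall>m<k. \<exists>y>0. determined_by_prefix p f (m # xs) y N1"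
  proof (rule ex_common_bound)
    show "\<forall>m<k. \<exists>N. \<exists>y>0. determined_by_prefix p f (m # xs) y N"
      using ev_mu.IH(2) by blast
  qed (meson determined_by_prefix_mono)
  then obtain N1 where "\<forall>m<k. \<exists>y>0. determined_by_prefix p f (m # xs) y N1" ..
  with N show ?case by (blast intro: determined_by_prefix_Mu)
qed

lemma computable_partial_continuous:
  assumes "computable_partial F" "F p = Some q"
  shows "\<exists>N. \<forall>p' q'. agree N p p' \<longrightarrow> F p' = Some q' \<longrightarrow> agree M q q'"
proof -
  obtain e where e: "\<And>p q n. F p = Some q \<Longrightarrow> ev p e [n] (q n)"
    using assms(1) unfolding computable_partial_def by blast
  have "\<forall>m<M. \<exists>N. determined_by_prefix p e [m] (q m) N"
    using e[OF assms(2)] ev_finite_use by blast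
  then obtain N where N: "\<forall>m<M. determined_by_prefix p e [m] (q m) N"
    using ex_common_bound[of M "\<lambda>m. determined_by_prefix p e [m] (q m)"]
      determined_by_prefix_mono by meson
  show ?thesis
  proof (intro exI allI impI)
    fix p' q' assume p': "agree N p p'" and q': "F p' = Some q'"
    have "q m = q' m" if "m < M" for m
      using N that p' e[OF q'] ev_deterministic unfolding determined_by_prefix_def by blast
    then show "agree M q q'" unfolding agree_def by blast
  qed
qed

lemma wcode_inj: "wcode u = wcode v \<Longrightarrow> u = v"
proof (induction u arbitrary: v)
  case Nil then show ?case by (cases v) auto
next
  case (Cons a u)
  then show ?case
  proof (cases v)
    case Nil then show ?thesis using Cons by simp
  next
    case (Cons b v')
    with Cons.prems have "2 * wcode u + (if a then 1 else 0) = 2 * wcode v' + (if b then 1 else 0)"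
      by simp
    then have "a = b" "wcode u = wcode v'" by (auto split: if_splits) presburger+
    then show ?thesis using Cons Cons.IH by simp
  qed
qed

lemma length_le_wcode: "length w \<le> wcode w"
  by (induction w) auto

lemma wcode_less_power: "length w \<le> N \<Longrightarrow> wcode w < 2 ^ (N + 1)"
proof -
  assume "length w \<le> N"
  have "wcode w + 2 \<le> 2 ^ (length w + 1)" by (induction w) auto
  also have "\<dots> \<le> 2 ^ (N + 1)" using \<open>length w \<le> N\<close> by (intro power_increasing) auto
  finally show ?thesis by simp
qed

definition tree_name :: "bool list set \<Rightarrow> baire" where
  "tree_name T = (\<lambda>n. if \<exists>w\<in>T. wcode w = n then 1 else 0)"

definition cantor_name :: "(nat \<Rightarrow> bool) \<Rightarrow> baire" where
  "cantor_name y = (\<lambda>t. if y t then 1 else 0)"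

lemma tree_rep_tree_name: "is_tree T \<Longrightarrow> tree_rep (tree_name T) = Some T"
proof -
  assume "is_tree T"
  moreover have "{w. tree_name T (wcode w) = 1} = T"
    unfolding tree_name_def using wcode_inj by auto
  moreover have "\<forall>n. tree_name T n \<le> 1" unfolding tree_name_def by auto
  ultimately show ?thesis unfolding tree_rep_def by simp
qed

lemma cantor_rep_cantor_name: "cantor_rep (cantor_name y) = Some y"
  unfolding cantor_rep_def cantor_name_def by auto

lemma agree_tree_name:
  assumes "\<And>w. length w < E \<Longrightarrow> w \<in> T \<longleftrightarrow> w \<in> T'"
  shows "agree E (tree_name T) (tree_name T')"
  unfolding agree_def tree_name_def
  using assms length_le_wcode by (metis le_less_trans)

lemma agree_tree_rep:
  assumes "tree_rep h = Some S" "tree_rep h' = Some S'" "agree (2 ^ (N + 1)) h h'" "length w \<le> N"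
  shows "w \<in> S \<longleftrightarrow> w \<in> S'"
proof -
  have "S = {w. h (wcode w) = 1}" "S' = {w. h' (wcode w) = 1}"
    using assms(1,2) unfolding tree_rep_def by (auto split: if_splits)
  moreover have "h (wcode w) = h' (wcode w)"
    using assms(3) wcode_less_power[OF assms(4)] unfolding agree_def by blast
  ultimately show ?thesis by simp
qed

lemma agree_cantor_name: "map y [0..<N] = map y' [0..<N] \<Longrightarrow> agree N (cantor_name y) (cantor_name y')"
  unfolding agree_def cantor_name_def by (simp add: map_eq_conv)

definition chain_limit :: "(nat \<Rightarrow> 'a list) \<Rightarrow> nat \<Rightarrow> 'a" where
  "chain_limit u t = u (Suc t) ! t"

lemma prefix_chain_nth:
  assumes step: "\<And>m. \<exists>v. u (Suc m) = u m @ v"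
    and "t < length (u m)" "t < length (u m')"
  shows "u m ! t = u m' ! t"
proof -
  have prefix: "\<exists>v. u j = u i @ v" if "i \<le> j" for i j
    using that
  proof (induction rule: dec_induct)
    case (step j)
    then show ?case using assms(1)[of j] by (metis append.assoc)
  qed simp
  show ?thesis
  proof (cases "m \<le> m'")
    case True
    then obtain v where "u m' = u m @ v" using prefix by blast
    then show ?thesis using assms(2) by (simp add: nth_append)
  next
    case False
    then obtain v where "u m = u m' @ v" using prefix by fastforce
    then show ?thesis using assms(3) by (simp add: nth_append)
  qed
qed

lemma chain_limit_nth:
  assumes "\<And>m. \<exists>v. u (Suc m) = u m @ v" "\<And>m. m \<le> length (u m)" "t < length (u m)"
  shows "chain_limit u t = u m ! t"
  unfolding chain_limit_def using assms prefix_chain_nth[of u] by (metis Suc_le_lessD)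

lemma map_chain_limit:
  assumes "\<And>m. \<exists>v. u (Suc m) = u m @ v" "\<And>m. m \<le> length (u m)" "k \<le> length (u m)"
  shows "map (chain_limit u) [0..<k] = take k (u m)"
  by (rule nth_equalityI) (use assms chain_limit_nth[of u] in auto)

lemma ex_path_extending:
  assumes tree: "is_tree S" and "w \<in> S"
    and extendible: "\<And>v. v \<in> S \<Longrightarrow> length w \<le> length v \<Longrightarrow> \<exists>b. v @ [b] \<in> S"
  shows "\<exists>y\<in>paths S. map y [0..<length w] = w"
proof -
  define u where "u m = ((\<lambda>v. v @ [SOME b. v @ [b] \<in> S]) ^^ m) w" for m
  have u: "u m \<in> S \<and> length (u m) = length w + m" for m
  proof (induction m)
    case 0 then show ?case using \<open>w \<in> S\<close> by (simp add: u_def)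
  next
    case (Suc m)
    then have "\<exists>b. u m @ [b] \<in> S" using extendible by simp
    then have "u m @ [SOME b. u m @ [b] \<in> S] \<in> S" by (rule someI_ex)
    then show ?case using Suc by (simp add: u_def)
  qed
  have step: "\<exists>v. u (Suc m) = u m @ v" for m by (simp add: u_def)
  have long: "m \<le> length (u m)" for m using u by simp
  have "chain_limit u \<in> paths S"
    unfolding paths_def
  proof (intro CollectI allI)
    fix k
    have "take k (u k) @ drop k (u k) \<in> S" using u by simp
    then show "map (chain_limit u) [0..<k] \<in> S"
      using map_chain_limit[OF step long long] tree unfolding is_tree_def by metis
  qed
  moreover have "map (chain_limit u) [0..<length w] = w"
    using map_chain_limit[OF step long, of "length w" 0] by (simp add: u_def[of 0])
  ultimately show ?thesis by blast
qed

lemma C_eq_nonempty_D: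
  assumes "C_eq n S \<noteq> {}"
  obtains d where "C_eq n S = paths S" "is_tree S"
    "\<And>w. w \<in> S \<Longrightarrow> d \<le> length w \<Longrightarrow> card {b. w @ [b] \<in> S} = 1"
proof -
  let ?cond = "is_tree S \<and> (\<forall>k. n \<le> 2 ^ k \<longrightarrow> card (level S k) = n)
    \<and> (\<exists>d. \<forall>w \<in> S. d \<le> length w \<longrightarrow> card {b. w @ [b] \<in> S} = 1)"
  have cond: ?cond
    using assms unfolding C_eq_def by (rule contrapos_np) (rule if_not_P)
  then obtain d where "\<forall>w \<in> S. d \<le> length w \<longrightarrow> card {b. w @ [b] \<in> S} = 1" by blast
  moreover have "C_eq n S = paths S" using cond unfolding C_eq_def by (rule if_P)
  ultimately show ?thesis using cond by (intro that) auto
qed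

lemma ex_path_eventually_nonbranching:
  assumes "is_tree S" "\<And>w. w \<in> S \<Longrightarrow> d \<le> length w \<Longrightarrow> card {b. w @ [b] \<in> S} = 1"
    and "w \<in> S" "d \<le> length w"
  shows "\<exists>y\<in>paths S. map y [0..<length w] = w"
proof (rule ex_path_extending[OF assms(1,3)])
  fix v assume "v \<in> S" "length w \<le> length v"
  then have "card {b. v @ [b] \<in> S} = 1" using assms(2,4) by simp
  then have "{b. v @ [b] \<in> S} \<noteq> {}" by (metis card.empty zero_neq_one)
  then show "\<exists>b. v @ [b] \<in> S" by blast
qed


section \<open>Spine trees\<close>

text \<open>If \<open>0 \<in> B\<close> there are exactly two
  vertices of every positive length; if B is infinite, z is the only path.\<close>

definition spine_tree :: "(nat \<Rightarrow> bool) \<Rightarrow> nat set \<Rightarrow> bool list set" where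
  "spine_tree z B = {w. w = map z [0..<length w] \<or>
     (\<exists>i. i < length w \<and> i \<in> B \<and> (\<forall>i'\<in>B. i' < length w \<longrightarrow> i' \<le> i) \<and>
          w = map z [0..<i] @ [\<not> z i] @ replicate (length w - Suc i) False)}"

lemma mem_spine_tree_level:
  assumes "i \<in> B" "i < k" "\<forall>i'\<in>B. i' < k \<longrightarrow> i' \<le> i" "length w = k"
  shows "w \<in> spine_tree z B \<longleftrightarrow>
    w = map z [0..<k] \<or> w = map z [0..<i] @ [\<not> z i] @ replicate (k - Suc i) False"
proof
  assume "w \<in> spine_tree z B"
  then consider "w = map z [0..<k]"
    | i' where "i' < k" "i' \<in> B" "\<forall>i''\<in>B. i'' < k \<longrightarrow> i'' \<le> i'"
      "w = map z [0..<i'] @ [\<not> z i'] @ replicate (k - Suc i') False"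
    unfolding spine_tree_def using assms(4) by auto
  then show "w = map z [0..<k] \<or> w = map z [0..<i] @ [\<not> z i] @ replicate (k - Suc i) False"
  proof cases
    case 2
    then have "i' = i" using assms by (meson le_antisym)
    then show ?thesis using 2 by simp
  qed simp
next
  assume "w = map z [0..<k] \<or> w = map z [0..<i] @ [\<not> z i] @ replicate (k - Suc i) False"
  then show "w \<in> spine_tree z B" unfolding spine_tree_def using assms by auto
qed

lemma is_tree_spine_tree: "is_tree (spine_tree z B)"
  unfolding is_tree_def
proof (intro allI impI)
  fix u v assume uv: "u @ v \<in> spine_tree z B"
  let ?w = "u @ v"
  have u: "u = take (length u) ?w" by simp
  from uv consider "?w = map z [0..<length ?w]"
    | i where "i < length ?w" "i \<in> B" "\<forall>i'\<in>B. i' < length ?w \<longrightarrow> i' \<le> i"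
      "?w = map z [0..<i] @ [\<not> z i] @ replicate (length ?w - Suc i) False"
    unfolding spine_tree_def by blast
  then show "u \<in> spine_tree z B"
  proof cases
    case 1
    then have "u = map z [0..<length u]" using u by (metis length_append le_add1 take_map take_upt add_0)
    then show ?thesis unfolding spine_tree_def by blast
  next
    case 2
    have u_eq: "u = take (length u) (map z [0..<i] @ [\<not> z i] @ replicate (length ?w - Suc i) False)"
      using u 2(4) by metis
    show ?thesis
    proof (cases "length u \<le> i")
      case True
      then have "u = map z [0..<length u]" using u_eq by (simp add: take_map)
      then show ?thesis unfolding spine_tree_def by blast
    next
      case False
      then have "length u - i = Suc (length u - Suc i)" by simp
      then have "u = map z [0..<i] @ [\<not> z i] @ replicate (length u - Suc i) False"
        using u_eq False by (simp add: min_def split: if_splits)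
      moreover have "\<forall>i'\<in>B. i' < length u \<longrightarrow> i' \<le> i" using 2(3) by auto
      ultimately show ?thesis unfolding spine_tree_def mem_Collect_eq
        by (intro disjI2 exI[of _ i]) (use False 2(2) in auto)
    qed
  qed
qed

lemma spine_in_paths_spine_tree: "z \<in> paths (spine_tree z B)"
  unfolding paths_def spine_tree_def by auto

lemma ex_greatest_below:
  fixes B :: "nat set"
  assumes "0 \<in> B" "0 < k"
  obtains i where "i \<in> B" "i < k" "\<forall>i'\<in>B. i' < k \<longrightarrow> i' \<le> i"
proof -
  let ?S = "B \<inter> {..<k}"
  have "finite ?S" "?S \<noteq> {}" using assms by auto
  then have "Max ?S \<in> ?S" "\<forall>x\<in>?S. x \<le> Max ?S" using Max_in Max_ge by blast+
  then show ?thesis using that by auto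
qed

lemma card_level_spine_tree:
  assumes "0 \<in> B" "0 < k"
  shows "card (level (spine_tree z B) k) = 2"
proof -
  obtain i where i: "i \<in> B" "i < k" "\<forall>i'\<in>B. i' < k \<longrightarrow> i' \<le> i"
    using ex_greatest_below[OF assms] .
  let ?a = "map z [0..<k]" and ?b = "map z [0..<i] @ [\<not> z i] @ replicate (k - Suc i) False"
  have "level (spine_tree z B) k = {?a, ?b}"
    unfolding level_def using mem_spine_tree_level[OF i] i(2) by auto
  moreover have "?a ! i \<noteq> ?b ! i" using i(2) by (simp add: nth_append)
  then have "?a \<noteq> ?b" by metis
  ultimately show ?thesis by simp
qed

lemma C_le_2_spine_tree:
  assumes "0 \<in> B"
  shows "C_le 2 (spine_tree z B) = paths (spine_tree z B)"
proof -
  have "card (level (spine_tree z B) k) = 2" if "2 \<le> (2::nat) ^ k" for k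
    using that card_level_spine_tree[OF assms] by (cases k) auto
  then show ?thesis unfolding C_le_def using is_tree_spine_tree by simp
qed

lemma paths_spine_tree_infinite:
  assumes "infinite B"
  shows "paths (spine_tree z B) = {z}"
proof -
  have "x = z" if x: "x \<in> paths (spine_tree z B)" for x
  proof
    fix m
    obtain b where b: "b \<in> B" "m < b"
      using assms by (metis finite_nat_set_iff_bounded_le not_le_imp_less)
    have last: "b \<in> B" "b < Suc b" "\<forall>i'\<in>B. i' < Suc b \<longrightarrow> i' \<le> b" using b by auto
    have "map x [0..<Suc b] \<in> spine_tree z B" using x unfolding paths_def by blast
    then have "map x [0..<Suc b] = map z [0..<Suc b] \<or>
        map x [0..<Suc b] = map z [0..<b] @ [\<not> z b] @ replicate (Suc b - Suc b) False"
      using mem_spine_tree_level[OF last] by simp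
    then have "take b (map x [0..<Suc b]) = map z [0..<b]"
    proof
      assume "map x [0..<Suc b] = map z [0..<Suc b]"
      then show ?thesis by (simp add: take_map del: upt_Suc)
    qed (simp del: upt_Suc)
    then have "map x [0..<b] = map z [0..<b]" by (simp add: take_map del: upt_Suc)
    then have "map x [0..<b] ! m = map z [0..<b] ! m" by (simp only:)
    then show "x m = z m" using b(2) by simp
  qed
  then show ?thesis using spine_in_paths_spine_tree by auto
qed

lemma spine_tree_cong:
  assumes "\<forall>t<length w. z t = z' t" "\<forall>i<length w. i \<in> B \<longleftrightarrow> i \<in> B'"
  shows "w \<in> spine_tree z B \<longleftrightarrow> w \<in> spine_tree z' B'"
proof -
  have "map z [0..<j] = map z' [0..<j]" if "j \<le> length w" for j
    using that assms(1) by auto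
  moreover have "(\<forall>i'\<in>B. i' < length w \<longrightarrow> i' \<le> i) \<longleftrightarrow> (\<forall>i'\<in>B'. i' < length w \<longrightarrow> i' \<le> i)" for i
    using assms(2) by auto
  ultimately show ?thesis
    unfolding spine_tree_def mem_Collect_eq using assms
    by (smt (verit, best) less_imp_le_nat order_refl)
qed

lemma tree_name_spine_tree:
  assumes "0 \<in> B"
  shows "tree_rep (tree_name (spine_tree z B)) = Some (spine_tree z B)"
    and "tree_name (spine_tree z B) \<in> realizer_dom tree_rep (C_le 2)"
proof -
  show rep: "tree_rep (tree_name (spine_tree z B)) = Some (spine_tree z B)"
    using tree_rep_tree_name is_tree_spine_tree by blast
  have "C_le 2 (spine_tree z B) \<noteq> {}"
    using C_le_2_spine_tree[OF assms] spine_in_paths_spine_tree by blast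
  then show "tree_name (spine_tree z B) \<in> realizer_dom tree_rep (C_le 2)"
    unfolding realizer_dom_def using rep by auto
qed

text \<open>A realizer may be altered at a single argument, so the backward functional K has to succeed
  on every name of every solution of the instance computed by H.\<close>

lemma weihrauch_reduction_instance:
  assumes reduction: "\<forall>G. realizes dU dV g G \<longrightarrow>
      realizes dX dY f (\<lambda>p. Option.bind (H p) (\<lambda>h. Option.bind (G h) (\<lambda>r. K (pair p r))))"
    and named: "\<And>v. \<exists>r. dV r = Some v"
    and p: "p \<in> realizer_dom dX f"
  obtains h u where "H p = Some h" "dU h = Some u" "g u \<noteq> {}"
    "\<And>r v. dV r = Some v \<Longrightarrow> v \<in> g u \<Longrightarrow>
       \<exists>q y. K (pair p r) = Some q \<and> dY q = Some y \<and> y \<in> f (the (dX p))"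
proof -
  let ?D = "realizer_dom dU g"
  let ?solves = "\<lambda>h x. \<exists>r v. x = Some r \<and> dV r = Some v \<and> v \<in> g (the (dU h))"
  define G0 where "G0 h = (if h \<in> ?D then Some (SOME r. \<exists>v. dV r = Some v \<and> v \<in> g (the (dU h))) else None)"
    for h
  have G0: "?solves h (G0 h)" if "h \<in> ?D" for h
  proof -
    have "g (the (dU h)) \<noteq> {}" using that unfolding realizer_dom_def by auto
    then obtain v where "v \<in> g (the (dU h))" by blast
    moreover obtain r where "dV r = Some v" using named by blast
    ultimately have "\<exists>r v. dV r = Some v \<and> v \<in> g (the (dU h))" by blast
    then have "\<exists>v. dV (SOME r. \<exists>v. dV r = Some v \<and> v \<in> g (the (dU h))) = Some v \<and> v \<in> g (the (dU h))"
      by (rule someI_ex)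
    then show ?thesis unfolding G0_def using that by simp
  qed
  have realizer: "realizes dU dV g (G0(h := x))" if "h \<in> ?D \<longrightarrow> ?solves h x" for h x
    unfolding realizes_def using that G0 by auto
  have solves_f: "\<exists>q y. Option.bind (H p) (\<lambda>h. Option.bind (G h) (\<lambda>r. K (pair p r))) = Some q \<and>
      dY q = Some y \<and> y \<in> f (the (dX p))" if "realizes dU dV g G" for G
    using reduction that p unfolding realizes_def by blast
  obtain h where h: "H p = Some h"
    using solves_f[OF realizer[of undefined "G0 undefined"]] G0 by fastforce
  have "h \<in> ?D"
    using solves_f[OF realizer[of h None]] h by auto
  then obtain u where u: "dU h = Some u" "g u \<noteq> {}" unfolding realizer_dom_def by auto
  show ?thesis
  proof (rule that[OF h u])
    fix r v assume "dV r = Some v" "v \<in> g u"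
    then have "realizes dU dV g (G0(h := Some r))" using realizer u by auto
    then show "\<exists>q y. K (pair p r) = Some q \<and> dY q = Some y \<and> y \<in> f (the (dX p))"
      using solves_f h by fastforce
  qed
qed

section \<open>The diagonal construction\<close>

definition zero_extension :: "bool list \<Rightarrow> nat \<Rightarrow> bool" where
  "zero_extension \<pi> t \<longleftrightarrow> t < length \<pi> \<and> \<pi> ! t"

lemma map_zero_extension:
  "length \<pi> \<le> k \<Longrightarrow> map (zero_extension \<pi>) [0..<k] = \<pi> @ replicate (k - length \<pi>) False"
  by (rule nth_equalityI) (auto simp: zero_extension_def nth_append)

definition stage_name :: "bool list \<Rightarrow> nat set \<Rightarrow> baire" where
  "stage_name \<pi> B = tree_name (spine_tree (zero_extension \<pi>) B)"

locale diagonal_stages =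
  fixes \<pi> :: "nat \<Rightarrow> bool list" and d :: "nat \<Rightarrow> bool" and e :: "nat \<Rightarrow> nat"
  assumes stage_0: "\<pi> 0 = []"
    and stage_Suc: "\<And>j. \<pi> (Suc j) = \<pi> j @ [d j] @ replicate (e j) False"
begin

definition branch :: "nat \<Rightarrow> nat" where
  "branch j = length (\<pi> j)"

definition limit :: "nat \<Rightarrow> bool" where
  "limit = chain_limit \<pi>"

lemma branch_0: "branch 0 = 0"
  by (simp add: branch_def stage_0)

lemma branch_Suc: "branch (Suc j) = branch j + 1 + e j"
  by (simp add: branch_def stage_Suc)

lemma strict_mono_branch: "strict_mono branch"
  by (simp add: strict_mono_Suc_iff branch_Suc)

lemma le_branch: "j \<le> branch j"
  using strict_mono_branch by (simp add: strict_mono_imp_increasing)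

lemma stage_prefix: "\<exists>v. \<pi> (Suc j) = \<pi> j @ v"
  using stage_Suc by blast

lemma length_stage: "j \<le> length (\<pi> j)"
  using le_branch by (simp add: branch_def)

lemma map_limit: "k \<le> branch j \<Longrightarrow> map limit [0..<k] = take k (\<pi> j)"
  unfolding limit_def branch_def by (rule map_chain_limit[OF stage_prefix length_stage])

lemma limit_nth: "t < branch j \<Longrightarrow> limit t = \<pi> j ! t"
  unfolding limit_def branch_def by (rule chain_limit_nth[OF stage_prefix length_stage])

lemma limit_branch: "limit (branch j) = d j"
  using limit_nth[of "branch j" "Suc j"] by (simp add: branch_Suc stage_Suc nth_append branch_def)

lemma map_limit_beyond_branch:
  assumes "branch j < k" "k \<le> branch (Suc j)"
  shows "map limit [0..<k] = \<pi> j @ [d j] @ replicate (k - Suc (branch j)) False"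
proof -
  have "k - branch j = Suc (k - Suc (branch j))" "k - Suc (branch j) \<le> e j"
    using assms branch_Suc by auto
  then show ?thesis
    using map_limit[OF assms(2)] assms(1) by (simp add: stage_Suc branch_def min_def)
qed

lemma branch_below_Suc_iff: "i < branch (Suc j) \<Longrightarrow> i \<in> range branch \<longleftrightarrow> i \<in> branch ` {..j}"
  using strict_mono_branch by (auto simp: strict_mono_less less_Suc_eq_le)

lemma spine_tree_limit_eq_stage:
  assumes "length w \<le> branch (Suc j)"
  shows "w \<in> spine_tree limit (range branch) \<longleftrightarrow> w \<in> spine_tree (zero_extension (\<pi> j)) (branch ` {..j})"
proof (cases "length w \<le> branch j")
  case True
  show ?thesis
  proof (rule spine_tree_cong)
    show "\<forall>t<length w. limit t = zero_extension (\<pi> j) t"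
      using True limit_nth by (auto simp: zero_extension_def branch_def)
    show "\<forall>i<length w. i \<in> range branch \<longleftrightarrow> i \<in> branch ` {..j}"
      using branch_below_Suc_iff assms by auto
  qed
next
  case False
  let ?k = "length w" and ?i = "branch j"
  have below: "i' \<le> ?i" if i': "i' \<in> range branch" "i' < ?k" for i'
  proof -
    obtain m where m: "i' = branch m" using i'(1) by blast
    then have "branch m < branch (Suc j)" using i'(2) assms by simp
    then have "m \<le> j" using strict_mono_less[OF strict_mono_branch] by simp
    then show ?thesis using m strict_mono_less_eq[OF strict_mono_branch] by simp
  qed
  have last_limit: "?i \<in> range branch" "?i < ?k" "\<forall>i'\<in>range branch. i' < ?k \<longrightarrow> i' \<le> ?i"
    using False below by auto
  have last_stage: "?i \<in> branch ` {..j}" "?i < ?k" "\<forall>i'\<in>branch ` {..j}. i' < ?k \<longrightarrow> i' \<le> ?i"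
    using False strict_mono_branch by (auto simp: strict_mono_less_eq)
  have limit_i: "map limit [0..<?i] = \<pi> j"
    using map_limit[of ?i j] by (simp add: branch_def)
  have limit_k: "map limit [0..<?k] = \<pi> j @ [d j] @ replicate (?k - Suc ?i) False"
    using map_limit_beyond_branch False assms by simp
  have ext_i: "map (zero_extension (\<pi> j)) [0..<?i] = \<pi> j"
    using map_zero_extension[of "\<pi> j" ?i] by (simp add: branch_def)
  have ext_k: "map (zero_extension (\<pi> j)) [0..<?k] = \<pi> j @ [False] @ replicate (?k - Suc ?i) False"
  proof -
    have "?k - length (\<pi> j) = Suc (?k - Suc ?i)" using False by (simp add: branch_def)
    then show ?thesis using map_zero_extension[of "\<pi> j" ?k] False by (simp add: branch_def)
  qed
  have "zero_extension (\<pi> j) ?i = False" by (simp add: zero_extension_def branch_def)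
  then show ?thesis
    unfolding mem_spine_tree_level[OF last_limit refl] mem_spine_tree_level[OF last_stage refl]
      limit_i limit_k ext_i ext_k limit_branch
    by (cases "d j") auto
qed

lemma limit_instance:
  "tree_rep (tree_name (spine_tree limit (range branch))) = Some (spine_tree limit (range branch))"
  "tree_name (spine_tree limit (range branch)) \<in> realizer_dom tree_rep (C_le 2)"
  "C_le 2 (spine_tree limit (range branch)) = {limit}"
proof -
  have "0 \<in> range branch" using branch_0 by (metis rangeI)
  moreover have "infinite (range branch)"
    using strict_mono_imp_inj_on[OF strict_mono_branch] finite_imageD by blast
  ultimately show
    "tree_rep (tree_name (spine_tree limit (range branch))) = Some (spine_tree limit (range branch))"
    "tree_name (spine_tree limit (range branch)) \<in> realizer_dom tree_rep (C_le 2)"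
    "C_le 2 (spine_tree limit (range branch)) = {limit}"
    using tree_name_spine_tree C_le_2_spine_tree paths_spine_tree_infinite by auto
qed

lemma agree_stage_name_limit:
  "agree (branch (Suc j)) (stage_name (\<pi> j) (branch ` {..j})) (tree_name (spine_tree limit (range branch)))"
  unfolding stage_name_def
proof (rule agree_tree_name)
  fix w :: "bool list" assume "length w < branch (Suc j)"
  then show "w \<in> spine_tree (zero_extension (\<pi> j)) (branch ` {..j}) \<longleftrightarrow> w \<in> spine_tree limit (range branch)"
    using spine_tree_limit_eq_stage[of w j] by simp
qed

end

text \<open>What stage \<open>\<pi>\<close>, with branching points B, must choose: the bit d differs from the bit
  at position \<open>|\<pi>|\<close> that K computes from the padded instance and a path y of the tree that H
  makes of it; N covers the part of y that K reads for this bit, and e zeros are appended so that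
  the next branching point lies beyond what H and K read of the instance.\<close>

definition stage_spec ::
  "(baire \<Rightarrow> baire option) \<Rightarrow> (baire \<Rightarrow> baire option) \<Rightarrow> bool list \<Rightarrow> nat set \<Rightarrow> nat \<Rightarrow> bool \<Rightarrow> nat \<Rightarrow> bool"
where
  "stage_spec K H \<pi> B e d N \<longleftrightarrow>
   (\<exists>h S y q. H (stage_name \<pi> B) = Some h \<and> tree_rep h = Some S \<and> y \<in> paths S \<and>
      K (pair (stage_name \<pi> B) (cantor_name y)) = Some q \<and> d = (q (length \<pi>) \<noteq> 1) \<and> length \<pi> \<le> N \<and>
      (\<forall>p' r' q'. agree (length \<pi> + 1 + e) (stage_name \<pi> B) p' \<longrightarrow> agree N (cantor_name y) r' \<longrightarrow>
          K (pair p' r') = Some q' \<longrightarrow> q' (length \<pi>) = q (length \<pi>)) \<and>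
      (\<forall>p' h'. agree (length \<pi> + 1 + e) (stage_name \<pi> B) p' \<longrightarrow> H p' = Some h' \<longrightarrow>
          agree (2 ^ (N + 1)) h h'))"

text \<open>A state is the prefix fixed so far with its set of branching points; c chooses e, d and N.\<close>

primrec stages :: "(bool list \<times> nat set \<Rightarrow> nat \<times> bool \<times> nat) \<Rightarrow> nat \<Rightarrow> bool list \<times> nat set" where
  "stages c 0 = ([], {0})"
| "stages c (Suc j) =
    (fst (stages c j) @ [fst (snd (c (stages c j)))] @ replicate (fst (c (stages c j))) False,
     insert (length (fst (stages c j)) + 1 + fst (c (stages c j))) (snd (stages c j)))"

context
  fixes K H :: "baire \<Rightarrow> baire option" and n :: nat
  assumes computable_K: "computable_partial K" and computable_H: "computable_partial H"
    and reduction: "\<forall>G. realizes tree_rep cantor_rep (C_eq n) G \<longrightarrow>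
      realizes tree_rep cantor_rep (C_le 2) (\<lambda>p. Option.bind (H p) (\<lambda>h. Option.bind (G h) (\<lambda>r. K (pair p r))))"
begin

lemma reduction_on_instance:
  assumes "p \<in> realizer_dom tree_rep (C_le 2)"
  obtains h S where "H p = Some h" "tree_rep h = Some S" "C_eq n S \<noteq> {}"
    "\<And>y. y \<in> C_eq n S \<Longrightarrow> \<exists>q x. K (pair p (cantor_name y)) = Some q \<and> cantor_rep q = Some x \<and>
       x \<in> C_le 2 (the (tree_rep p))"
proof -
  have named: "\<exists>r. cantor_rep r = Some y" for y
    using cantor_rep_cantor_name by blast
  obtain h S where h: "H p = Some h" "tree_rep h = Some S" "C_eq n S \<noteq> {}"
    and solves: "\<And>r y. cantor_rep r = Some y \<Longrightarrow> y \<in> C_eq n S \<Longrightarrow>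
      \<exists>q x. K (pair p r) = Some q \<and> cantor_rep q = Some x \<and> x \<in> C_le 2 (the (tree_rep p))"
    by (rule weihrauch_reduction_instance[OF reduction named assms]) (rule that; assumption)
  show ?thesis
    by (rule that[OF h]) (rule solves[OF cantor_rep_cantor_name])
qed

lemma ex_stage_spec:
  assumes "0 \<in> B"
  shows "\<exists>e d N. stage_spec K H \<pi> B e d N"
proof -
  let ?p = "stage_name \<pi> B" and ?i = "length \<pi>"
  have "?p \<in> realizer_dom tree_rep (C_le 2)"
    using tree_name_spine_tree(2)[OF assms] by (simp add: stage_name_def)
  then obtain h S where h: "H ?p = Some h" and S: "tree_rep h = Some S" "C_eq n S \<noteq> {}"
    and solves: "\<And>y. y \<in> C_eq n S \<Longrightarrow> \<exists>q x. K (pair ?p (cantor_name y)) = Some q \<and>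
        cantor_rep q = Some x \<and> x \<in> C_le 2 (the (tree_rep ?p))"
    by (rule reduction_on_instance) (rule that; assumption)
  obtain y where y: "y \<in> C_eq n S" using S(2) by blast
  obtain depth where "C_eq n S = paths S" using C_eq_nonempty_D[OF S(2)] .
  with y have "y \<in> paths S" by simp
  obtain q where q: "K (pair ?p (cantor_name y)) = Some q" using solves[OF y] by blast
  obtain NK where NK: "\<forall>v q'. agree NK (pair ?p (cantor_name y)) v \<longrightarrow> K v = Some q' \<longrightarrow>
      agree (Suc ?i) q q'"
    using computable_partial_continuous[where F = K, OF computable_K q] ..
  define N where "N = max NK ?i"
  obtain NH where NH: "\<forall>p' h'. agree NH ?p p' \<longrightarrow> H p' = Some h' \<longrightarrow> agree (2 ^ (N + 1)) h h'"
    using computable_partial_continuous[where F = H, OF computable_H h] ..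
  define e where "e = max NH NK"
  have bounds: "NK \<le> ?i + 1 + e" "NK \<le> N" "NH \<le> ?i + 1 + e" by (simp_all add: e_def N_def)
  then have "q' ?i = q ?i"
    if "agree (?i + 1 + e) ?p p'" "agree N (cantor_name y) r'" "K (pair p' r') = Some q'" for p' r' q'
  proof -
    have "agree NK (pair ?p (cantor_name y)) (pair p' r')"
      using agree_pair[OF agree_mono[OF that(1)] agree_mono[OF that(2)]] bounds by blast
    then have "agree (Suc ?i) q q'" using NK that(3) by blast
    then show ?thesis unfolding agree_def by simp
  qed
  moreover have "agree (2 ^ (N + 1)) h h'" if "agree (?i + 1 + e) ?p p'" "H p' = Some h'" for p' h'
    using NH agree_mono[OF that(1) bounds(3)] that(2) by blast
  ultimately have "stage_spec K H \<pi> B e (q ?i \<noteq> 1) N"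
    unfolding stage_spec_def using h S(1) \<open>y \<in> paths S\<close> q
    by (intro exI[of _ h] exI[of _ S] exI[of _ y] exI[of _ q]) (auto simp: N_def)
  then show ?thesis by blast
qed

lemma ex_diagonal_stages:
  obtains \<pi> d e N where "diagonal_stages \<pi> d e"
    "\<And>j. stage_spec K H (\<pi> j) (diagonal_stages.branch \<pi> ` {..j}) (e j) (d j) (N j)"
proof -
  define c where "c s = (SOME t. stage_spec K H (fst s) (snd s) (fst t) (fst (snd t)) (snd (snd t)))" for s
  have c: "stage_spec K H (fst s) (snd s) (fst (c s)) (fst (snd (c s))) (snd (snd (c s)))"
    if "0 \<in> snd s" for s
  proof -
    from ex_stage_spec[OF that] obtain e d N where "stage_spec K H (fst s) (snd s) e d N" by blast
    then have "\<exists>t. stage_spec K H (fst s) (snd s) (fst t) (fst (snd t)) (snd (snd t))"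
      by (intro exI[of _ "(e, d, N)"]) simp
    then show ?thesis unfolding c_def by (rule someI_ex)
  qed
  define \<pi> where "\<pi> j = fst (stages c j)" for j
  define d where "d j = fst (snd (c (stages c j)))" for j
  define e where "e j = fst (c (stages c j))" for j
  define N where "N j = snd (snd (c (stages c j)))" for j
  interpret diagonal_stages \<pi> d e
    by unfold_locales (simp_all add: \<pi>_def d_def e_def)
  have branches: "snd (stages c j) = branch ` {..j}" for j
  proof (induction j)
    case 0 then show ?case using branch_0 by simp
  next
    case (Suc j)
    have "snd (stages c (Suc j)) = insert (branch (Suc j)) (snd (stages c j))"
      by (simp add: branch_Suc branch_def \<pi>_def e_def)
    then show ?case using Suc by (simp add: atMost_Suc)
  qed
  have "stage_spec K H (\<pi> j) (branch ` {..j}) (e j) (d j) (N j)" for j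
  proof -
    have "0 \<in> snd (stages c j)" using branches branch_0 by force
    then show ?thesis using c[of "stages c j"] branches by (simp add: \<pi>_def d_def e_def N_def)
  qed
  then show ?thesis using that diagonal_stages_axioms by blast
qed

lemma reduction_absurd: False
proof -
  obtain \<pi> d e N where "diagonal_stages \<pi> d e"
    and spec: "\<And>j. stage_spec K H (\<pi> j) (diagonal_stages.branch \<pi> ` {..j}) (e j) (d j) (N j)"
    by (rule ex_diagonal_stages) (rule that; assumption)
  interpret diagonal_stages \<pi> d e by fact
  define T where "T = spine_tree limit (range branch)"
  note T = limit_instance[folded T_def]
  obtain h S where h: "H (tree_name T) = Some h" "tree_rep h = Some S" "C_eq n S \<noteq> {}"
    and solves: "\<And>y. y \<in> C_eq n S \<Longrightarrow> \<exists>q x. K (pair (tree_name T) (cantor_name y)) = Some q \<and>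
        cantor_rep q = Some x \<and> x \<in> C_le 2 (the (tree_rep (tree_name T)))"
    by (rule reduction_on_instance[OF T(2)]) (rule that; assumption)
  obtain j where S: "C_eq n S = paths S" "is_tree S"
    "\<And>w. w \<in> S \<Longrightarrow> j \<le> length w \<Longrightarrow> card {b. w @ [b] \<in> S} = 1"
    by (rule C_eq_nonempty_D[OF h(3)]) (rule that; assumption)
  \<comment> \<open>Diagonalise at stage j: as \<open>j \<le> branch j \<le> N j\<close>, the prefix of y that K reads
     reaches the depth beyond which S no longer branches.\<close>
  let ?i = "branch j" and ?p = "stage_name (\<pi> j) (branch ` {..j})"
  obtain hj Sj y q where hj: "H ?p = Some hj" "tree_rep hj = Some Sj" and y: "y \<in> paths Sj"
    and q: "K (pair ?p (cantor_name y)) = Some q" "d j = (q ?i \<noteq> 1)" "?i \<le> N j"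
    and K_cont: "\<And>p' r' q'. agree (?i + 1 + e j) ?p p' \<Longrightarrow> agree (N j) (cantor_name y) r' \<Longrightarrow>
          K (pair p' r') = Some q' \<Longrightarrow> q' ?i = q ?i"
    and H_cont: "\<And>p' h'. agree (?i + 1 + e j) ?p p' \<Longrightarrow> H p' = Some h' \<Longrightarrow> agree (2 ^ (N j + 1)) hj h'"
    using spec[of j] unfolding stage_spec_def branch_def by blast
  have close: "agree (?i + 1 + e j) ?p (tree_name T)"
    using agree_stage_name_limit[of j] unfolding T_def branch_Suc .
  define w where "w = map y [0..<N j]"
  have "w \<in> S"
    using y agree_tree_rep[OF hj(2) h(2) H_cont[OF close h(1)], of w] unfolding w_def paths_def by simp
  moreover have "j \<le> length w" using le_branch[of j] q(3) by (simp add: w_def)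
  ultimately obtain y' where y': "y' \<in> paths S" "map y' [0..<N j] = w"
    using ex_path_eventually_nonbranching[OF S(2,3)] unfolding w_def by fastforce
  obtain q' x where q': "K (pair (tree_name T) (cantor_name y')) = Some q'" "cantor_rep q' = Some x"
    and "x \<in> C_le 2 T"
    using solves[of y'] y'(1) S(1) T(1) by auto
  then have "x = limit" using T(3) by simp
  moreover have "q' ?i = q ?i"
    using K_cont[OF close agree_cantor_name q'(1)] y'(2) unfolding w_def by simp
  moreover have "x ?i = (q' ?i = 1)" using q'(2) unfolding cantor_rep_def by (auto split: if_splits)
  ultimately show False using limit_branch[of j] q(2) by simp
qed

end

theorem corollary24:
  fixes n :: nat
  assumes "1 \<le> n"
  shows "\<not> weihrauch_le tree_rep cantor_rep (C_le 2) tree_rep cantor_rep (C_eq n)"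
proof
  assume "weihrauch_le tree_rep cantor_rep (C_le 2) tree_rep cantor_rep (C_eq n)"
  then obtain K H where "computable_partial K" "computable_partial H"
    "\<forall>G. realizes tree_rep cantor_rep (C_eq n) G \<longrightarrow> realizes tree_rep cantor_rep (C_le 2)
       (\<lambda>p. Option.bind (H p) (\<lambda>h. Option.bind (G h) (\<lambda>r. K (pair p r))))"
    unfolding weihrauch_le_def by blast
  then show False by (rule reduction_absurd)
qed

end
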